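(* Let $\mathcal{U}$ be a subspace of $\mathbb{R}^n$. The following are equivalent: (1) $\mathcal{U}$ is recoverable by MTFA; (2) $\mathcal{U}$ is realizable; (3) $\mathcal{U}^\perp$ has the ellipsoid fitting property.
   Context: Minimum trace factor analysis (MTFA) with input a symmetric $n\times n$ matrix $X$ is the semidefinite program: minimize $\operatorname{tr}(L)$ over pairs $(D,L)$ of $n\times n$ symmetric matrices subject to $X=D+L$, $L$ positive semidefinite, $D$ diagonal. A subspace $\mathcal{U}\subseteq\mathbb{R}^n$ is recoverable by MTFA if for every diagonal $D^\star$ and every positive semidefinite $L^\star$ with column space equal to $\mathcal{U}$, the pair $(D^\star,L^\star)$ is the unique optimal solution of MTFA with input $X=D^\star+L^\star$. A correlation matrix is a positive semidefinite matrix with all diagonal entries equal to $1$. A subspace $\mathcal{U}\subseteq\mathbb{R}^n$ is realizable if there is an $n\times n$ correlation matrix $Q$ whose nullspace contains $\mathcal{U}$. A centered ellipsoid in $\mathbb{R}^k$ is described by a symmetric positive semidefinite $k\times k$ matrix $M$, and it passes through $v\in\mathbb{R}^k$ if $v^TMv=1$. A subspace $\mathcal{V}\subseteq\mathbb{R}^n$ has the ellipsoid fitting property if there is a $k\times n$ matrix $V$ (for some $k$) with row space $\mathcal{V}$ and a centered ellipsoid in $\mathbb{R}^k$ passing through every column of $V$. *)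

theory Defs
  imports "HOL-Analysis.Analysis"
begin

definition symmetric_mat :: "real^'n^'n \<Rightarrow> bool" where
  "symmetric_mat A \<longleftrightarrow> transpose A = A"

definition psd :: "real^'n^'n \<Rightarrow> bool" where
  "psd A \<longleftrightarrow> symmetric_mat A \<and> (\<forall>x. 0 \<le> x \<bullet> (A *v x))"

definition diagonal_mat :: "real^'n^'n \<Rightarrow> bool" where
  "diagonal_mat D \<longleftrightarrow> (\<forall>i j. i \<noteq> j \<longrightarrow> D $ i $ j = 0)"

definition col_space :: "real^'n^'n \<Rightarrow> (real^'n) set" where
  "col_space A = range (\<lambda>x. A *v x)"

definition null_space :: "real^'n^'n \<Rightarrow> (real^'n) set" where
  "null_space A = {x. A *v x = 0}"

definition mtfa_feasible :: "real^'n^'n \<Rightarrow> real^'n^'n \<Rightarrow> real^'n^'n \<Rightarrow> bool" where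
  "mtfa_feasible X D L \<longleftrightarrow> symmetric_mat D \<and> symmetric_mat L \<and>
     X = D + L \<and> psd L \<and> diagonal_mat D"

definition mtfa_unique_opt :: "real^'n^'n \<Rightarrow> real^'n^'n \<Rightarrow> real^'n^'n \<Rightarrow> bool" where
  "mtfa_unique_opt X D L \<longleftrightarrow> mtfa_feasible X D L \<and>
     (\<forall>D' L'. mtfa_feasible X D' L' \<longrightarrow> trace L \<le> trace L') \<and>
     (\<forall>D' L'. mtfa_feasible X D' L' \<and> trace L' = trace L \<longrightarrow> D' = D \<and> L' = L)"

definition recoverable :: "(real^'n) set \<Rightarrow> bool" where
  "recoverable U \<longleftrightarrow> (\<forall>D L. diagonal_mat D \<and> psd L \<and> col_space L = U \<longrightarrow>
      mtfa_unique_opt (D + L) D L)"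

definition correlation_mat :: "real^'n^'n \<Rightarrow> bool" where
  "correlation_mat Q \<longleftrightarrow> psd Q \<and> (\<forall>i. Q $ i $ i = 1)"

definition realizable :: "(real^'n) set \<Rightarrow> bool" where
  "realizable U \<longleftrightarrow> (\<exists>Q. correlation_mat Q \<and> U \<subseteq> null_space Q)"

(* A k x k matrix (k arbitrary) is represented as M :: nat => nat => real on indices < k. *)
definition psd_k :: "nat \<Rightarrow> (nat \<Rightarrow> nat \<Rightarrow> real) \<Rightarrow> bool" where
  "psd_k k M \<longleftrightarrow> (\<forall>i<k. \<forall>j<k. M i j = M j i) \<and>
     (\<forall>x::nat \<Rightarrow> real. 0 \<le> (\<Sum>i<k. \<Sum>j<k. x i * M i j * x j))"

(* A k x n matrix V is represented by the list of its k rows (vectors in R^n);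
   column j of V is the vector (rows ! i $ j)_{i<k} in R^k.
   The centered ellipsoid given by M passes through v iff v^T M v = 1. *)
definition ellipsoid_fitting :: "(real^'n) set \<Rightarrow> bool" where
  "ellipsoid_fitting W \<longleftrightarrow> (\<exists>(rows :: (real^'n) list) M.
     span (set rows) = W \<and> psd_k (length rows) M \<and>
     (\<forall>j. (\<Sum>i<length rows. \<Sum>l<length rows.
              (rows ! i) $ j * M i l * (rows ! l) $ j) = 1))"

end

theory Submission
  imports Defs
begin

text \<open>
  A correlation matrix Q whose null space contains U is a dual certificate for MTFA: if
  D + L = D' + L' with D' diagonal and L' psd, then E = D - D' is diagonal, and since Q has unit
  diagonal and Q L = 0 we get trace L' - trace L = trace E = trace (L' Q) >= 0, with equality only
  if L' Q = 0, which forces E = 0.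

  Conversely, if U is not realizable then (1/n, ..., 1/n) lies outside the compact convex hull of
  the vectors (w_1^2, ..., w_n^2) with w a unit vector of the orthogonal complement of U.
  A separating hyperplane yields weights d with negative sum whose diagonal quadratic form is
  positive definite on that complement. Adding a small multiple of diag d to the orthogonal
  projection P onto U keeps it psd and lowers its trace, so (0, P) is not the optimum.

  Finally, if the rows of V form an orthonormal basis of the complement of U, then Q |-> V Q V^T
  and M |-> V^T M V translate between correlation matrices vanishing on U and centred ellipsoids
  through the columns of V: the diagonal entries of V^T M V are the ellipsoid equations.
\<close>

lemma symmetric_mat_iff: "symmetric_mat A \<longleftrightarrow> (\<forall>i j. A$i$j = A$j$i)"
  by (auto simp: symmetric_mat_def transpose_def vec_eq_iff)

lemma symmetric_mat_inner_commute:
  assumes "symmetric_mat A"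
  shows "x \<bullet> (A *v y) = y \<bullet> (A *v x)"
  by (metis assms dot_lmul_matrix inner_commute symmetric_mat_def vector_transpose_matrix)

lemma matrix_vector_mult_axis_component: "(A *v axis k 1) $ i = A$i$k"
  by (simp add: matrix_vector_mult_def axis_def if_distrib cong: if_cong)

lemma sum_matrix_vector_mult: "(\<Sum>i\<in>I. A i) *v x = (\<Sum>i\<in>I. A i *v x)"
  by (simp add: matrix_vector_mult_def vec_eq_iff sum_distrib_right sum.swap[of _ I])

lemma matrix_vector_mult_sum: "A *v (\<Sum>l\<in>J. x l) = (\<Sum>l\<in>J. A *v x l)"
  by (simp add: matrix_vector_mult_def vec_eq_iff sum_distrib_left sum.swap[of _ J])

lemma inner_matrix_vector_mult_sums:
  fixes A :: "real^'n^'n"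
  shows "(\<Sum>i\<in>I. y i *\<^sub>R v i) \<bullet> (A *v (\<Sum>l\<in>J. z l *\<^sub>R v l)) =
     (\<Sum>i\<in>I. \<Sum>l\<in>J. y i * (v i \<bullet> (A *v v l)) * z l)"
  by (simp add: matrix_vector_mult_sum matrix_vector_mult_scaleR inner_sum_left inner_sum_right
      sum_distrib_left mult_ac) (rule sum.swap)

lemma matrix_add_rdistrib: "(A + B) ** C = A ** C + B ** C"
  by (simp add: matrix_matrix_mult_def vec_eq_iff distrib_right sum.distrib)

lemma matrix_mult_sum_right: "A ** (\<Sum>i\<in>I. B i) = (\<Sum>i\<in>I. A ** B i)"
  by (simp add: matrix_matrix_mult_def vec_eq_iff sum_distrib_left sum.swap[of _ I])

lemma trace_sum: "trace (\<Sum>i\<in>I. A i) = (\<Sum>i\<in>I. trace (A i))"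
  by (simp add: trace_def sum.swap[of _ I])

section \<open>Positive semidefinite matrices\<close>

lemma psd_quadratic_nonneg: "psd A \<Longrightarrow> 0 \<le> x \<bullet> (A *v x)"
  by (simp add: psd_def)

lemma quadratic_form_add_scaled:
  assumes "symmetric_mat A"
  shows "(x + t *\<^sub>R y) \<bullet> (A *v (x + t *\<^sub>R y)) =
           x \<bullet> (A *v x) + 2 * t * (y \<bullet> (A *v x)) + t\<^sup>2 * (y \<bullet> (A *v y))"
  using symmetric_mat_inner_commute[OF assms, of x y]
  by (simp add: algebra_simps power2_eq_square)

lemma psd_cauchy_schwarz:
  assumes "psd A"
  shows "(y \<bullet> (A *v x))\<^sup>2 \<le> (x \<bullet> (A *v x)) * (y \<bullet> (A *v y))"
proof -
  define a b c where "a = x \<bullet> (A *v x)" and "b = y \<bullet> (A *v x)" and "c = y \<bullet> (A *v y)"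
  have quad: "0 \<le> a + 2 * t * b + t\<^sup>2 * c" for t
    using psd_quadratic_nonneg[OF assms, of "x + t *\<^sub>R y"] assms
    by (simp add: quadratic_form_add_scaled psd_def a_def b_def c_def)
  have "c \<ge> 0"
    using assms by (simp add: c_def psd_def)
  show ?thesis
  proof (cases "c = 0")
    case True
    have "b = 0"
    proof (rule ccontr)
      assume "b \<noteq> 0"
      then show False
        using quad[of "- (a + 1) / (2 * b)"] True by (simp add: field_simps)
    qed
    then show ?thesis using True by (simp add: b_def c_def)
  next
    case False
    with \<open>c \<ge> 0\<close> have "c > 0" by simp
    have "0 \<le> a + 2 * (- b / c) * b + (- b / c)\<^sup>2 * c"
      by (rule quad)
    also have "\<dots> = (a * c - b\<^sup>2) / c"
      using \<open>c > 0\<close> by (simp add: field_simps power2_eq_square)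
    finally show ?thesis
      using \<open>c > 0\<close> by (simp add: a_def b_def c_def zero_le_divide_iff mult.commute)
  qed
qed

lemma psd_mult_eq_0_if_quadratic_eq_0:
  assumes "psd A" "x \<bullet> (A *v x) = 0"
  shows "A *v x = 0"
proof -
  have "((A *v x) \<bullet> (A *v x))\<^sup>2 \<le> 0"
    using psd_cauchy_schwarz[OF assms(1), where y = "A *v x" and x = x] assms(2) by simp
  then show ?thesis by simp
qed

lemma quadratic_form_add_null:
  assumes "symmetric_mat Q" "Q *v u = 0"
  shows "(x + u) \<bullet> (Q *v (x + u)) = x \<bullet> (Q *v x)"
  using symmetric_mat_inner_commute[OF assms(1), of u x] assms(2)
  by (simp add: matrix_vector_right_distrib inner_add_left)

lemma psd_diagonal_nonneg: "psd A \<Longrightarrow> 0 \<le> A$k$k"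
  using psd_quadratic_nonneg[of A "axis k 1"]
  by (simp add: inner_axis' matrix_vector_mult_axis_component)

lemma psd_row_col_eq_0_if_diagonal_eq_0:
  assumes "psd A" "A$k$k = 0"
  shows "A$i$k = 0" "A$k$i = 0"
proof -
  have "A *v axis k 1 = 0"
    using assms by (intro psd_mult_eq_0_if_quadratic_eq_0)
      (simp_all add: inner_axis' matrix_vector_mult_axis_component)
  then show "A$i$k = 0"
    by (metis matrix_vector_mult_axis_component zero_index)
  then show "A$k$i = 0"
    using assms(1) by (metis psd_def symmetric_mat_iff)
qed

lemma psd_pivot_bound:
  assumes "psd A"
  shows "((A *v x)$k)\<^sup>2 \<le> A$k$k * (x \<bullet> (A *v x))"
  using psd_cauchy_schwarz[OF assms, where y = "axis k 1" and x = x]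
  by (simp add: inner_axis' matrix_vector_mult_axis_component mult.commute)

definition outer :: "real^'n \<Rightarrow> real^'n^'n" where
  "outer v = (\<chi> i j. v$i * v$j)"

lemma outer_mult_vec: "outer v *v x = (v \<bullet> x) *\<^sub>R v"
  by (simp add: outer_def matrix_vector_mult_def inner_vec_def vec_eq_iff sum_distrib_left mult_ac)

lemma quadratic_form_sum_outer:
  "x \<bullet> ((\<Sum>k\<in>I. c k *\<^sub>R outer (v k)) *v x) = (\<Sum>k\<in>I. c k * (v k \<bullet> x)\<^sup>2)"
  by (simp add: sum_matrix_vector_mult scaleR_matrix_vector_assoc[symmetric] outer_mult_vec
      inner_sum_right inner_commute power2_eq_square mult_ac)

lemma psd_sum_outer:
  assumes "\<And>k. k \<in> I \<Longrightarrow> 0 \<le> c k"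
  shows "psd (\<Sum>k\<in>I. c k *\<^sub>R outer (v k))"
  unfolding psd_def quadratic_form_sum_outer
  using assms by (auto simp: symmetric_mat_iff outer_def mult.commute intro: sum_nonneg)

text \<open>One step of a Cholesky factorisation: what remains is the Schur complement of the pivot.\<close>

lemma psd_minus_pivot_outer:
  assumes "psd A" "0 < A$k$k"
  defines "v \<equiv> \<chi> j. A$k$j / sqrt (A$k$k)"
  shows "psd (A - outer v)" and "outer v $ i $ j = A$k$i * A$k$j / A$k$k"
proof -
  show entry: "outer v $ i $ j = A$k$i * A$k$j / A$k$k" for i j
    using assms(2) by (simp add: outer_def v_def real_sqrt_mult[symmetric])
  have symA: "A$i$j = A$j$i" for i j
    using assms(1) by (simp add: psd_def symmetric_mat_iff)
  have "v \<bullet> x = (A *v x)$k / sqrt (A$k$k)" for x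
    by (simp add: v_def inner_vec_def matrix_vector_mult_def sum_divide_distrib)
  then have "(v \<bullet> x)\<^sup>2 \<le> x \<bullet> (A *v x)" for x
    using psd_pivot_bound[OF assms(1), of x k] assms(2)
    by (simp add: power_divide divide_le_eq mult.commute)
  then have "0 \<le> x \<bullet> ((A - outer v) *v x)" for x
    by (simp add: matrix_vector_mult_diff_rdistrib outer_mult_vec inner_diff_right
        power2_eq_square inner_commute[of x v])
  moreover have "symmetric_mat (A - outer v)"
    using symA by (simp add: symmetric_mat_iff entry mult.commute)
  ultimately show "psd (A - outer v)"
    by (simp add: psd_def)
qed

lemma psd_supported_eq_sum_outer:
  assumes "finite S" "psd A" "\<And>i j. i \<notin> S \<or> j \<notin> S \<Longrightarrow> A$i$j = 0"
  shows "\<exists>(m::nat) V. A = (\<Sum>l<m. outer (V l))"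
  using assms
proof (induction S arbitrary: A rule: finite_induct)
  case empty
  then have "A = 0" by (simp add: vec_eq_iff)
  then show ?case by (intro exI[of _ 0]) simp
next
  case (insert k S)
  have symA: "A$i$j = A$j$i" for i j
    using insert.prems(1) by (simp add: psd_def symmetric_mat_iff)
  show ?case
  proof (cases "A$k$k = 0")
    case True
    then have "A$i$k = 0" for i
      using psd_row_col_eq_0_if_diagonal_eq_0[OF insert.prems(1)] by blast
    then have "i \<notin> S \<or> j \<notin> S \<Longrightarrow> A$i$j = 0" for i j
      using insert.prems(2) symA by (metis insertE)
    then show ?thesis
      using insert.IH insert.prems(1) by blast
  next
    case False
    then have pos: "0 < A$k$k"
      using psd_diagonal_nonneg[OF insert.prems(1), of k] by simp
    define v where "v = (\<chi> j. A$k$j / sqrt (A$k$k))"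
    note pivot = psd_minus_pivot_outer[OF insert.prems(1) pos, folded v_def]
    have "(A - outer v)$i$j = 0" if "i \<notin> S \<or> j \<notin> S" for i j
    proof (cases "i = k \<or> j = k")
      case True
      then show ?thesis
        using pos symA by (auto simp: pivot(2))
    next
      case False
      then have "A$i$j = 0 \<and> (A$k$i = 0 \<or> A$k$j = 0)"
        using that insert.prems(2) symA by (metis insertE)
      then show ?thesis
        by (auto simp: pivot(2))
    qed
    then obtain m :: nat and V where "A - outer v = (\<Sum>l<m. outer (V l))"
      using insert.IH pivot(1) by blast
    then have "A = (\<Sum>l<Suc m. outer ((V(m := v)) l))"
      by (simp add: algebra_simps)
    then show ?thesis by blast
  qed
qed

lemma psd_eq_sum_outer:
  "psd A \<Longrightarrow> \<exists>(m::nat) V. A = (\<Sum>l<m. outer (V l))"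
  by (rule psd_supported_eq_sum_outer[of UNIV]) simp_all

lemma matrix_mult_outer_eq_0: "A *v v = 0 \<Longrightarrow> A ** outer v = 0"
  by (simp add: vec_eq_iff outer_def matrix_matrix_mult_def matrix_vector_mult_def
      sum_distrib_right[symmetric] mult.assoc[symmetric])

lemma trace_matrix_mult_outer: "trace (A ** outer v) = v \<bullet> (A *v v)"
  by (simp add: trace_def outer_def matrix_matrix_mult_def matrix_vector_mult_def
      inner_vec_def sum_distrib_left mult_ac)

lemma psd_trace_mult:
  assumes "psd A" "psd B"
  shows "0 \<le> trace (A ** B)" and "trace (A ** B) = 0 \<Longrightarrow> A ** B = 0"
proof -
  obtain m :: nat and V where B: "B = (\<Sum>l<m. outer (V l))"
    using psd_eq_sum_outer[OF assms(2)] by blast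
  have tr: "trace (A ** B) = (\<Sum>l<m. V l \<bullet> (A *v V l))"
    by (simp add: B matrix_mult_sum_right trace_sum trace_matrix_mult_outer)
  show "0 \<le> trace (A ** B)"
    unfolding tr using assms(1) by (intro sum_nonneg) (simp add: psd_def)
  assume "trace (A ** B) = 0"
  then have "V l \<bullet> (A *v V l) = 0" if "l < m" for l
    using that assms(1) by (simp add: tr psd_def sum_nonneg_eq_0_iff)
  then show "A ** B = 0"
    using assms(1)
    by (simp add: B matrix_mult_sum_right psd_mult_eq_0_if_quadratic_eq_0 matrix_mult_outer_eq_0)
qed

definition diag_mat :: "real^'n \<Rightarrow> real^'n^'n" where
  "diag_mat d = (\<chi> i j. if i = j then d$i else 0)"

lemma diagonal_mat_diag_mat: "diagonal_mat (diag_mat d)"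
  by (simp add: diagonal_mat_def diag_mat_def)

lemma diagonal_mat_imp_symmetric: "diagonal_mat D \<Longrightarrow> symmetric_mat D"
  by (metis diagonal_mat_def symmetric_mat_iff)

lemma diagonal_mat_mult_diag_entry:
  "diagonal_mat D \<Longrightarrow> (D ** A)$j$j = D$j$j * A$j$j"
  unfolding diagonal_mat_def matrix_matrix_mult_def
  by (simp add: sum.remove[of UNIV j] sum.neutral)

lemma trace_diag_mat: "trace (diag_mat d) = d \<bullet> 1"
  by (simp add: trace_def diag_mat_def inner_vec_def)

definition coord_sq :: "real^'n \<Rightarrow> real^'n" where
  "coord_sq x = (\<chi> j. (x$j)\<^sup>2)"

lemma quadratic_form_diag_mat: "x \<bullet> (diag_mat d *v x) = d \<bullet> coord_sq x"
  by (simp add: diag_mat_def coord_sq_def matrix_vector_mult_def inner_vec_def if_distrib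
      if_distribR power2_eq_square mult_ac cong: if_cong)

lemma coord_sq_scaleR: "coord_sq (r *\<^sub>R x) = r\<^sup>2 *\<^sub>R coord_sq x"
  by (simp add: coord_sq_def vec_eq_iff power_mult_distrib)

lemma one_inner_coord_sq: "1 \<bullet> coord_sq x = x \<bullet> x"
  by (simp add: coord_sq_def inner_vec_def power2_eq_square)

lemma continuous_on_coord_sq: "continuous_on S coord_sq"
  unfolding coord_sq_def by (intro continuous_intros)

definition orthonormal_list :: "'a::real_inner list \<Rightarrow> bool" where
  "orthonormal_list xs \<longleftrightarrow>
     (\<forall>i<length xs. \<forall>l<length xs. xs!i \<bullet> xs!l = (if i = l then 1 else 0))"

lemma orthonormal_list_basis_exists:
  fixes U :: "'a::euclidean_space set"
  assumes "subspace U"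
  obtains xs where "orthonormal_list xs" "span (set xs) = U"
proof -
  obtain B where orth: "pairwise orthogonal B" and norm: "\<And>x. x \<in> B \<Longrightarrow> norm x = 1"
    and indep: "independent B" and span: "span B = U"
    using orthonormal_basis_subspace[OF assms] by metis
  obtain xs where xs: "set xs = B" "distinct xs"
    using finite_distinct_list[OF independent_imp_finite[OF indep]] by blast
  have "orthonormal_list xs"
    unfolding orthonormal_list_def
    using orth norm xs by (auto simp: pairwise_def orthogonal_def nth_eq_iff_index_eq norm_eq_1)
  then show ?thesis
    using that xs span by blast
qed

definition proj_mat :: "(real^'n) list \<Rightarrow> real^'n^'n" where
  "proj_mat xs = (\<Sum>i<length xs. outer (xs!i))"

lemma proj_mat_mult_vec: "proj_mat xs *v x = (\<Sum>i<length xs. (xs!i \<bullet> x) *\<^sub>R xs!i)"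
  by (simp add: proj_mat_def sum_matrix_vector_mult outer_mult_vec)

lemma psd_proj_mat: "psd (proj_mat xs)"
  using psd_sum_outer[of "{..<length xs}" "\<lambda>_. 1" "\<lambda>i. xs!i"] by (simp add: proj_mat_def)

lemma proj_mat_mult_vec_in_span: "proj_mat xs *v x \<in> span (set xs)"
  unfolding proj_mat_mult_vec by (intro span_sum span_mul span_base) simp

lemma proj_mat_residual_orthogonal:
  assumes "orthonormal_list xs"
  shows "x - proj_mat xs *v x \<in> orthogonal_comp (span (set xs))"
proof -
  have "xs!m \<bullet> (proj_mat xs *v x) = xs!m \<bullet> x" if "m < length xs" for m
  proof -
    have "xs!m \<bullet> (proj_mat xs *v x) = (\<Sum>i<length xs. (xs!i \<bullet> x) * (xs!m \<bullet> xs!i))"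
      by (simp add: proj_mat_mult_vec inner_sum_right)
    also have "\<dots> = (\<Sum>i<length xs. if i = m then xs!i \<bullet> x else 0)"
      using assms that by (intro sum.cong) (auto simp: orthonormal_list_def)
    also have "\<dots> = xs!m \<bullet> x"
      using that by (simp add: inner_commute[of x])
    finally show ?thesis .
  qed
  then have "orthogonal b (x - proj_mat xs *v x)" if "b \<in> set xs" for b
    using that by (auto simp: in_set_conv_nth orthogonal_def inner_diff_right)
  then have "orthogonal (x - proj_mat xs *v x) y" if "y \<in> span (set xs)" for y
    using that orthogonal_to_span orthogonal_commute by metis
  then show ?thesis
    by (simp add: orthogonal_comp_def orthogonal_commute)
qed

lemma col_space_proj_mat:
  assumes "orthonormal_list xs"
  shows "col_space (proj_mat xs) = span (set xs)"
proof
  show "col_space (proj_mat xs) \<subseteq> span (set xs)"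
    using proj_mat_mult_vec_in_span by (auto simp: col_space_def)
  show "span (set xs) \<subseteq> col_space (proj_mat xs)"
  proof
    fix y assume y: "y \<in> span (set xs)"
    then have "y - proj_mat xs *v y \<in> span (set xs) \<inter> orthogonal_comp (span (set xs))"
      using proj_mat_residual_orthogonal[OF assms] proj_mat_mult_vec_in_span[of xs y]
      by (simp add: span_diff)
    then have "y - proj_mat xs *v y = 0"
      using orthogonal_Int_0[OF subspace_span] by blast
    then have "y = proj_mat xs *v y"
      by simp
    then show "y \<in> col_space (proj_mat xs)"
      by (auto simp: col_space_def)
  qed
qed

section \<open>Realizable subspaces are recoverable\<close>

lemma dual_certificate_trace_gap:
  assumes Q: "correlation_mat Q" and LQ: "L ** Q = 0" and D: "diagonal_mat D"
    and feas: "mtfa_feasible (D + L) D' L'"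
  shows "trace L' - trace L = trace (L' ** Q)"
    and "trace L' = trace L \<Longrightarrow> D' = D \<and> L' = L"
proof -
  have Qpsd: "psd Q" and Qdiag: "\<And>j. Q$j$j = 1"
    using Q by (auto simp: correlation_mat_def)
  define E where "E = D - D'"
  have L': "L' = L + E" and L'psd: "psd L'"
    using feas by (auto simp: E_def mtfa_feasible_def algebra_simps)
  have E: "diagonal_mat E"
    using feas D by (simp add: E_def mtfa_feasible_def diagonal_mat_def)
  have EQ: "E ** Q = L' ** Q"
    by (simp add: L' matrix_add_rdistrib LQ)
  have "trace (E ** Q) = trace E"
    by (simp add: trace_def diagonal_mat_mult_diag_entry[OF E] Qdiag)
  then show gap: "trace L' - trace L = trace (L' ** Q)"
    by (simp add: EQ L' trace_add)
  assume "trace L' = trace L"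
  then have "L' ** Q = 0"
    using psd_trace_mult(2)[OF L'psd Qpsd] gap by simp
  then have "E$j$j = 0" for j
    using diagonal_mat_mult_diag_entry[OF E, where A = Q and j = j] EQ Qdiag by simp
  then have "E = 0"
    using E by (simp add: diagonal_mat_def vec_eq_iff) metis
  then show "D' = D \<and> L' = L"
    by (simp add: E_def L')
qed

lemma mtfa_unique_opt_if_dual_certificate:
  assumes Q: "correlation_mat Q" and QL: "Q ** L = 0" and L: "psd L" and D: "diagonal_mat D"
  shows "mtfa_unique_opt (D + L) D L"
proof -
  have LQ: "L ** Q = 0"
    using QL L Q
    by (metis correlation_mat_def matrix_transpose_mul psd_def symmetric_mat_def
        transpose_mat mat_0)
  note gap = dual_certificate_trace_gap[OF Q LQ D]
  have "mtfa_feasible (D + L) D L"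
    using D L diagonal_mat_imp_symmetric[OF D] by (simp add: mtfa_feasible_def psd_def)
  moreover have "trace L \<le> trace L'" if "mtfa_feasible (D + L) D' L'" for D' L'
    using gap(1)[OF that] psd_trace_mult(1)[of L' Q] that Q
    by (simp add: mtfa_feasible_def correlation_mat_def)
  ultimately show ?thesis
    using gap(2) by (auto simp: mtfa_unique_opt_def)
qed

lemma realizable_imp_recoverable:
  fixes U :: "(real^'n) set"
  assumes "realizable U"
  shows "recoverable U"
proof -
  obtain Q where Q: "correlation_mat Q" and UQ: "U \<subseteq> null_space Q"
    using assms realizable_def by blast
  show ?thesis
    unfolding recoverable_def
  proof (intro allI impI)
    fix D L :: "real^'n^'n"
    assume DL: "diagonal_mat D \<and> psd L \<and> col_space L = U"
    then have "Q *v (L *v x) = 0" for x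
      using UQ by (auto simp: col_space_def null_space_def)
    then have "Q ** L = 0"
      by (simp add: matrix_eq matrix_vector_mul_assoc)
    then show "mtfa_unique_opt (D + L) D L"
      using mtfa_unique_opt_if_dual_certificate[OF Q] DL by blast
  qed
qed

section \<open>Recoverable subspaces are realizable\<close>

lemma realizable_if_in_convex_hull:
  fixes U :: "(real^'n) set"
  assumes S: "S \<subseteq> orthogonal_comp U" and c: "0 < c"
    and hull: "c *\<^sub>R 1 \<in> convex hull (coord_sq ` S)"
  shows "realizable U"
proof -
  obtain T u where T: "finite T" "T \<subseteq> coord_sq ` S"
    and u: "\<forall>y\<in>T. 0 \<le> u y" "(\<Sum>y\<in>T. u y *\<^sub>R y) = c *\<^sub>R 1"
    using hull unfolding convex_hull_explicit by blast
  obtain g where g: "\<And>y. y \<in> T \<Longrightarrow> g y \<in> S \<and> coord_sq (g y) = y"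
    using T(2) by (metis f_inv_into_f inv_into_into subsetD)
  define Q where "Q = (\<Sum>y\<in>T. (u y / c) *\<^sub>R outer (g y))"
  have "psd Q"
    unfolding Q_def using u(1) c by (intro psd_sum_outer) simp
  moreover have "Q$j$j = 1" for j
  proof -
    have "Q$j$j = (\<Sum>y\<in>T. u y * (coord_sq (g y))$j) / c"
      by (simp add: Q_def outer_def coord_sq_def power2_eq_square sum_divide_distrib)
    also have "\<dots> = (\<Sum>y\<in>T. u y *\<^sub>R y)$j / c"
      using g by simp
    finally show ?thesis
      using u(2) c by simp
  qed
  moreover have "Q *v w = 0" if "w \<in> U" for w
  proof -
    have "g y \<bullet> w = 0" if "y \<in> T" for y
      using g[OF that] S \<open>w \<in> U\<close> by (auto simp: orthogonal_comp_def orthogonal_def inner_commute)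
    then show ?thesis
      by (simp add: Q_def sum_matrix_vector_mult scaleR_matrix_vector_assoc[symmetric]
          outer_mult_vec)
  qed
  ultimately show ?thesis
    by (auto simp: realizable_def correlation_mat_def null_space_def)
qed

lemma inner_coord_sq_ge_if_ge_on_sphere:
  assumes "w \<in> W" "\<And>v. v \<in> W \<inter> sphere 0 1 \<Longrightarrow> eps \<le> d \<bullet> coord_sq v" "subspace W"
  shows "eps * (w \<bullet> w) \<le> d \<bullet> coord_sq w"
proof (cases "w = 0")
  case False
  then have "w /\<^sub>R norm w \<in> W \<inter> sphere 0 1"
    using assms(1,3) by (simp add: subspace_scale)
  then have "eps \<le> d \<bullet> coord_sq (w /\<^sub>R norm w)"
    by (rule assms(2))
  moreover have "d \<bullet> coord_sq (w /\<^sub>R norm w) = (d \<bullet> coord_sq w) / (w \<bullet> w)"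
    by (simp add: coord_sq_scaleR power_inverse power2_norm_eq_inner divide_inverse mult.commute)
  moreover have "w \<bullet> w > 0"
    using False by simp
  ultimately show ?thesis
    by (simp add: pos_le_divide_eq)
qed (simp add: coord_sq_def inner_vec_def)

lemma not_realizable_imp_separating_weights:
  fixes U :: "(real^'n) set"
  assumes "\<not> realizable U"
  obtains d eps where "0 < eps" "d \<bullet> 1 < 0"
    "\<And>w. w \<in> orthogonal_comp U \<Longrightarrow> eps * (w \<bullet> w) \<le> d \<bullet> coord_sq w"
proof -
  define n where "n = real CARD('n)"
  define K where "K = orthogonal_comp U \<inter> sphere 0 1"
  have "compact K"
    unfolding K_def
    using compact_Int_closed[OF compact_sphere closed_subspace[OF subspace_orthogonal_comp]]
    by (simp add: inf_commute)
  then have "compact (convex hull (coord_sq ` K))"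
    by (intro compact_convex_hull compact_continuous_image continuous_on_coord_sq)
  \<comment> \<open>Every point of \<open>coord_sq ` K\<close> has coordinate sum 1, whence the factor \<open>1 / n\<close>.\<close>
  moreover have "(1 / n) *\<^sub>R 1 \<notin> convex hull (coord_sq ` K)"
    using realizable_if_in_convex_hull[of K U "1 / n"] assms by (auto simp: K_def n_def)
  ultimately obtain a b where ab: "a \<bullet> ((1 / n) *\<^sub>R 1) < b"
    "\<And>y. y \<in> convex hull (coord_sq ` K) \<Longrightarrow> b < a \<bullet> y"
    using separating_hyperplane_closed_point[OF convex_convex_hull compact_imp_closed] by metis
  define t where "t = (a \<bullet> ((1 / n) *\<^sub>R 1) + b) / 2"
  define eps where "eps = (b - a \<bullet> ((1 / n) *\<^sub>R 1)) / 2"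
  define d where "d = a - t *\<^sub>R 1"
  have "n > 0"
    by (simp add: n_def)
  have "(1::real^'n) \<bullet> 1 = n"
    by (simp add: inner_vec_def n_def)
  then have "d \<bullet> 1 = - n * eps"
    using \<open>n > 0\<close> by (simp add: d_def t_def eps_def inner_diff_left field_simps)
  moreover have "eps > 0"
    using ab(1) by (simp add: eps_def)
  ultimately have "d \<bullet> 1 < 0"
    using \<open>n > 0\<close> by simp
  moreover have on_sphere: "eps \<le> d \<bullet> coord_sq v" if "v \<in> K" for v
  proof -
    have "b < a \<bullet> coord_sq v"
      using that by (intro ab(2) hull_inc imageI)
    moreover have "v \<bullet> v = 1"
      using that by (simp add: K_def dot_square_norm)
    then have "d \<bullet> coord_sq v = a \<bullet> coord_sq v - t"
      by (simp add: d_def inner_diff_left one_inner_coord_sq)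
    ultimately show ?thesis
      unfolding eps_def t_def by (simp add: field_simps)
  qed
  moreover have "eps * (w \<bullet> w) \<le> d \<bullet> coord_sq w" if "w \<in> orthogonal_comp U" for w
    using that on_sphere subspace_orthogonal_comp unfolding K_def
    by (rule inner_coord_sq_ge_if_ge_on_sphere)
  ultimately show ?thesis
    using that \<open>eps > 0\<close> by blast
qed

lemma square_perturbation_bound:
  fixes c e u w :: real
  assumes "0 < e"
  shows "(c - e) * w\<^sup>2 - (\<bar>c\<bar> + c\<^sup>2 / e) * u\<^sup>2 \<le> c * (u + w)\<^sup>2"
proof -
  have "c * (u + w)\<^sup>2 - ((c - e) * w\<^sup>2 - (\<bar>c\<bar> + c\<^sup>2 / e) * u\<^sup>2) =
          (e * w + c * u)\<^sup>2 / e + (c + \<bar>c\<bar>) * u\<^sup>2"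
    using assms by (simp add: field_simps power2_eq_square)
  moreover have "0 \<le> (e * w + c * u)\<^sup>2 / e + (c + \<bar>c\<bar>) * u\<^sup>2"
    using assms by (intro add_nonneg_nonneg) auto
  ultimately show ?thesis
    by linarith
qed

lemma coord_sq_perturbation_bound:
  assumes "0 < eps" and pos: "\<And>w. w \<in> W \<Longrightarrow> eps * (w \<bullet> w) \<le> d \<bullet> coord_sq w"
  obtains K where "0 \<le> K" "\<And>u w. w \<in> W \<Longrightarrow> - K * (u \<bullet> u) \<le> d \<bullet> coord_sq (u + w)"
proof -
  define k where "k j = \<bar>d$j\<bar> + (d$j)\<^sup>2 / eps" for j
  have k: "0 \<le> k j" for j
    using assms(1) by (simp add: k_def)
  have "- (\<Sum>j\<in>UNIV. k j) * (u \<bullet> u) \<le> d \<bullet> coord_sq (u + w)" if "w \<in> W" for u w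
  proof -
    have "(\<Sum>j\<in>UNIV. k j * (u$j)\<^sup>2) \<le> (\<Sum>j\<in>UNIV. k j * (u \<bullet> u))"
      using k by (intro sum_mono mult_left_mono)
        (auto simp: inner_vec_def power2_eq_square intro: member_le_sum)
    moreover have "(\<Sum>j\<in>UNIV. (d$j - eps) * (w$j)\<^sup>2 - k j * (u$j)\<^sup>2) \<le> d \<bullet> coord_sq (u + w)"
      unfolding k_def coord_sq_def inner_vec_def
      using square_perturbation_bound[OF assms(1)] by (auto intro!: sum_mono)
    moreover have "(\<Sum>j\<in>UNIV. (d$j - eps) * (w$j)\<^sup>2) = d \<bullet> coord_sq w - eps * (w \<bullet> w)"
      by (simp add: coord_sq_def inner_vec_def left_diff_distrib sum_subtractf
          sum_distrib_left power2_eq_square)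
    ultimately show ?thesis
      using pos[OF that] by (simp add: sum_subtractf sum_distrib_right)
  qed
  then show ?thesis
    using that k by (meson sum_nonneg)
qed

lemma psd_proj_mat_add_diag:
  assumes xs: "orthonormal_list xs" and "0 < eps"
    and pos: "\<And>w. w \<in> orthogonal_comp (span (set xs)) \<Longrightarrow> eps * (w \<bullet> w) \<le> d \<bullet> coord_sq w"
  obtains s where "0 < s" "psd (proj_mat xs + s *\<^sub>R diag_mat d)"
proof -
  obtain K where K: "0 \<le> K"
    "\<And>u w. w \<in> orthogonal_comp (span (set xs)) \<Longrightarrow> - K * (u \<bullet> u) \<le> d \<bullet> coord_sq (u + w)"
    using coord_sq_perturbation_bound[OF assms(2) pos] by blast
  define s where "s = 1 / (K + 1)"
  have "0 \<le> x \<bullet> ((proj_mat xs + s *\<^sub>R diag_mat d) *v x)" for x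
  proof -
    define u where "u = proj_mat xs *v x"
    have w: "x - u \<in> orthogonal_comp (span (set xs))"
      using proj_mat_residual_orthogonal[OF xs] by (simp add: u_def)
    then have "u \<bullet> (x - u) = 0"
      using proj_mat_mult_vec_in_span[of xs x]
      by (simp add: orthogonal_comp_def orthogonal_def u_def)
    then have "(x - u) \<bullet> u = 0"
      by (simp add: inner_commute)
    then have "x \<bullet> ((proj_mat xs + s *\<^sub>R diag_mat d) *v x) =
        u \<bullet> u + s * (d \<bullet> coord_sq (u + (x - u)))"
      by (simp add: matrix_vector_mult_add_rdistrib inner_add_right quadratic_form_diag_mat
          scaleR_matrix_vector_assoc[symmetric] u_def[symmetric] inner_diff_left)
    also have "\<dots> \<ge> u \<bullet> u - s * K * (u \<bullet> u)"
      using mult_left_mono[OF K(2)[OF w, of u], of s] K(1) by (simp add: s_def)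
    also have "u \<bullet> u - s * K * (u \<bullet> u) = (u \<bullet> u) / (K + 1)"
      using K(1) by (simp add: s_def field_simps)
    finally show ?thesis
      using K(1) by (simp add: order_trans[rotated])
  qed
  moreover have "symmetric_mat (proj_mat xs + s *\<^sub>R diag_mat d)"
    using psd_proj_mat[of xs] diagonal_mat_imp_symmetric[OF diagonal_mat_diag_mat, of d]
    by (simp add: psd_def symmetric_mat_iff)
  moreover have "0 < s"
    using K(1) by (simp add: s_def)
  ultimately show ?thesis
    using that by (simp add: psd_def)
qed

lemma recoverable_imp_realizable:
  fixes U :: "(real^'n) set"
  assumes U: "subspace U" and rec: "recoverable U"
  shows "realizable U"
proof (rule ccontr)
  assume "\<not> realizable U"
  then obtain d eps where eps: "0 < eps" and d: "d \<bullet> 1 < 0"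
    and pos: "\<And>w. w \<in> orthogonal_comp U \<Longrightarrow> eps * (w \<bullet> w) \<le> d \<bullet> coord_sq w"
    using not_realizable_imp_separating_weights by blast
  obtain xs where xs: "orthonormal_list xs" "span (set xs) = U"
    using orthonormal_list_basis_exists[OF U] by blast
  define P where "P = proj_mat xs"
  obtain s where s: "0 < s" "psd (P + s *\<^sub>R diag_mat d)"
    using psd_proj_mat_add_diag[OF xs(1) eps] pos xs(2) unfolding P_def by blast
  have "diagonal_mat (0::real^'n^'n)"
    by (simp add: diagonal_mat_def)
  then have "mtfa_unique_opt (0 + P) 0 P"
    using rec psd_proj_mat[of xs] col_space_proj_mat[OF xs(1)] xs(2)
    unfolding recoverable_def P_def by blast
  moreover have "mtfa_feasible (0 + P) (- (s *\<^sub>R diag_mat d)) (P + s *\<^sub>R diag_mat d)"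
    using s(2)
    by (auto simp: mtfa_feasible_def psd_def diagonal_mat_def diag_mat_def symmetric_mat_iff)
  ultimately have "trace P \<le> trace (P + s *\<^sub>R diag_mat d)"
    by (simp add: mtfa_unique_opt_def)
  moreover have "trace (P + s *\<^sub>R diag_mat d) = trace P + s * (d \<bullet> 1)"
    by (simp add: trace_add flip: trace_diag_mat) (simp add: trace_def sum_distrib_left)
  ultimately show False
    using mult_pos_neg[OF s(1) d] by simp
qed

section \<open>Ellipsoid fitting\<close>

text \<open>\<open>congruence_mat xs M\<close> is V^T M V for the matrix V with rows \<open>xs\<close>.\<close>

definition congruence_mat :: "(real^'n) list \<Rightarrow> (nat \<Rightarrow> nat \<Rightarrow> real) \<Rightarrow> real^'n^'n" where
  "congruence_mat xs M = (\<chi> a b. \<Sum>i<length xs. \<Sum>l<length xs. xs!i$a * M i l * xs!l$b)"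

lemma congruence_mat_mult_vec:
  "congruence_mat xs M *v x = (\<Sum>i<length xs. \<Sum>l<length xs. (M i l * (xs!l \<bullet> x)) *\<^sub>R xs!i)"
  by (simp add: congruence_mat_def vec_eq_iff matrix_vector_mult_def inner_vec_def
      sum_distrib_left sum_distrib_right mult_ac sum.swap[of _ UNIV])

lemma psd_congruence_mat:
  assumes "psd_k (length xs) M"
  shows "psd (congruence_mat xs M)"
proof -
  let ?k = "length xs"
  have "x \<bullet> (congruence_mat xs M *v x) =
          (\<Sum>i<?k. \<Sum>l<?k. (xs!i \<bullet> x) * M i l * (xs!l \<bullet> x))" for x
    unfolding congruence_mat_mult_vec inner_sum_right inner_scaleR_right
    by (intro sum.cong refl) (simp add: inner_commute mult_ac)
  moreover have "congruence_mat xs M $ a $ b = congruence_mat xs M $ b $ a" for a b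
  proof -
    have "congruence_mat xs M $ a $ b = (\<Sum>l<?k. \<Sum>i<?k. xs!i$a * M i l * xs!l$b)"
      unfolding congruence_mat_def by simp (rule sum.swap)
    also have "\<dots> = congruence_mat xs M $ b $ a"
      unfolding congruence_mat_def vec_lambda_beta
    proof (intro sum.cong refl)
      fix l i assume "l \<in> {..<?k}" "i \<in> {..<?k}"
      then have "M i l = M l i"
        using assms by (simp add: psd_k_def)
      then show "xs!i$a * M i l * xs!l$b = xs!l$b * M l i * xs!i$a"
        by simp
    qed
    finally show ?thesis .
  qed
  ultimately show ?thesis
    using assms by (simp add: psd_def psd_k_def symmetric_mat_iff)
qed

lemma ellipsoid_fitting_imp_realizable:
  fixes U :: "(real^'n) set"
  assumes "ellipsoid_fitting (orthogonal_comp U)"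
  shows "realizable U"
proof -
  obtain xs :: "(real^'n) list" and M where span: "span (set xs) = orthogonal_comp U"
    and M: "psd_k (length xs) M"
    and fit: "\<And>j. (\<Sum>i<length xs. \<Sum>l<length xs. xs!i$j * M i l * xs!l$j) = 1"
    using assms unfolding ellipsoid_fitting_def by blast
  have "congruence_mat xs M *v u = 0" if "u \<in> U" for u
  proof -
    have "xs!l \<bullet> u = 0" if "l < length xs" for l
      using span_base[of "xs!l" "set xs"] span \<open>u \<in> U\<close> that
      by (auto simp: orthogonal_comp_def orthogonal_def inner_commute)
    then show ?thesis
      by (simp add: congruence_mat_mult_vec)
  qed
  then show ?thesis
    using psd_congruence_mat[OF M] fit
    by (auto simp: realizable_def correlation_mat_def null_space_def congruence_mat_def)
qed

lemma realizable_imp_ellipsoid_fitting: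
  fixes U :: "(real^'n) set"
  assumes U: "subspace U" and "realizable U"
  shows "ellipsoid_fitting (orthogonal_comp U)"
proof -
  obtain Q where Q: "correlation_mat Q" and UQ: "U \<subseteq> null_space Q"
    using assms realizable_def by blast
  have Qpsd: "psd Q" and Qsym: "symmetric_mat Q" and Qdiag: "\<And>j. Q$j$j = 1"
    using Q by (auto simp: correlation_mat_def psd_def)
  obtain xs where xs: "orthonormal_list xs" "span (set xs) = orthogonal_comp U"
    using orthonormal_list_basis_exists[OF subspace_orthogonal_comp] by blast
  define k where "k = length xs"
  define M where "M i l = xs!i \<bullet> (Q *v xs!l)" for i l
  have expand: "(\<Sum>i<k. \<Sum>l<k. y i * M i l * z l) =
      (\<Sum>i<k. y i *\<^sub>R xs!i) \<bullet> (Q *v (\<Sum>l<k. z l *\<^sub>R xs!l))" for y z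
    by (simp add: inner_matrix_vector_mult_sums M_def)
  have "psd_k k M"
    using Qpsd symmetric_mat_inner_commute[OF Qsym]
    by (simp add: psd_k_def expand psd_def) (simp add: M_def)
  moreover have "(\<Sum>i<k. \<Sum>l<k. xs!i$j * M i l * xs!l$j) = 1" for j
  proof -
    \<comment> \<open>The fitting condition at \<open>j\<close> evaluates Q at the projection of the unit vector \<open>e\<^sub>j\<close>.\<close>
    define p where "p = proj_mat xs *v axis j 1"
    have p: "p = (\<Sum>i<k. xs!i$j *\<^sub>R xs!i)"
      by (simp add: p_def k_def proj_mat_mult_vec inner_axis)
    have "axis j 1 - p \<in> U"
      using proj_mat_residual_orthogonal[OF xs(1)] orthogonal_comp_self[OF U] xs(2)
      by (simp add: p_def)
    then have "p - axis j 1 \<in> U"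
      using subspace_neg[OF U] by fastforce
    then have "Q *v (p - axis j 1) = 0"
      using UQ by (auto simp: null_space_def)
    then have "p \<bullet> (Q *v p) = axis j 1 \<bullet> (Q *v axis j 1)"
      using quadratic_form_add_null[OF Qsym, of "p - axis j 1" "axis j 1"] by simp
    then show ?thesis
      by (simp add: expand p[symmetric] inner_axis' matrix_vector_mult_axis_component Qdiag)
  qed
  ultimately show ?thesis
    unfolding ellipsoid_fitting_def k_def using xs(2) by blast
qed

theorem proposition3p1:
  fixes U :: "(real^'n) set"
  assumes "subspace U"
  shows "(recoverable U \<longleftrightarrow> realizable U) \<and>
         (realizable U \<longleftrightarrow> ellipsoid_fitting (orthogonal_comp U))"
  using realizable_imp_recoverable recoverable_imp_realizable[OF assms]
    realizable_imp_ellipsoid_fitting[OF assms] ellipsoid_fitting_imp_realizable by blast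

end
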